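(* Let $N\ge2$ and let $(b,d)\in\mathbb{Z}^2$ be primitive with $N\nmid d$. Then there exists a sequence $v_0,\dots,v_k\in\mathbb{Z}^2$, $v_i=(b_i,d_i)$, with $v_0=(0,1)$, $v_k=(b,d)$, $b_{i}d_{i+1}-b_{i+1}d_{i}=1$ for $0\le i<k$, and $N\nmid d_i$ for all $0\le i\le k$. *)

theory Defs
  imports Main
begin

end

theory Submission
  imports Defs
begin

text \<open>
  Descent on \<open>\<bar>d\<bar>\<close>. For primitive \<open>(b, d)\<close> with \<open>\<bar>d\<bar> \<ge> 2\<close>, Bezout gives some \<open>(a, c)\<close> with
  \<open>a d - b c = 1\<close>, and this determinant is unchanged when a multiple of \<open>(b, d)\<close> is added to
  \<open>(a, c)\<close>. Hence \<open>c\<close> may be taken in the window \<open>0 < \<bar>c\<bar> < \<bar>d\<bar>\<close>, where both \<open>c\<close> and \<open>c - d\<close>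
  are admissible; as \<open>N \<nmid> d\<close>, one of them is not divisible by \<open>N\<close>, and by induction the chain
  reaching it is extended by \<open>(b, d)\<close>. The base cases \<open>(b, \<plusminus>1)\<close> are reached by walking along
  \<open>d = \<plusminus>1\<close>.
\<close>

inductive reachable :: "int \<Rightarrow> int \<Rightarrow> int \<Rightarrow> bool" for N :: int where
  start: "\<not> N dvd 1 \<Longrightarrow> reachable N 0 1"
| step: "reachable N a c \<Longrightarrow> a * d - b * c = 1 \<Longrightarrow> \<not> N dvd d \<Longrightarrow> reachable N b d"

lemma reachable_imp_chain:
  assumes "reachable N b d"
  shows "\<exists>(k::nat) (bs::nat \<Rightarrow> int) (ds::nat \<Rightarrow> int).
           bs 0 = 0 \<and> ds 0 = 1 \<and> bs k = b \<and> ds k = d \<and>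
           (\<forall>i<k. bs i * ds (Suc i) - bs (Suc i) * ds i = 1) \<and>
           (\<forall>i\<le>k. \<not> N dvd ds i)"
  using assms
proof (induction rule: reachable.induct)
  case start
  then show ?case
    by (intro exI[of _ 0] exI[of _ "\<lambda>_. 0"] exI[of _ "\<lambda>_. 1"]) auto
next
  case (step a c d b)
  then obtain k bs ds where chain: "bs 0 = 0" "ds 0 = 1" "bs k = a" "ds k = c"
    "\<forall>i<k. bs i * ds (Suc i) - bs (Suc i) * ds i = 1" "\<forall>i\<le>k. \<not> N dvd ds i"
    by blast
  let ?bs = "bs(Suc k := b)" and ?ds = "ds(Suc k := d)"
  have "\<forall>i<Suc k. ?bs i * ?ds (Suc i) - ?bs (Suc i) * ?ds i = 1"
    using chain step.hyps by (auto simp: less_Suc_eq)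
  moreover have "\<forall>i\<le>Suc k. \<not> N dvd ?ds i"
    using chain step.hyps by (auto simp: le_Suc_eq)
  ultimately show ?case
    using chain by (intro exI[of _ "Suc k"] exI[of _ ?bs] exI[of _ ?ds]) auto
qed

lemma reachable_uminus:
  assumes "reachable N b d"
  shows "reachable N (-b) (-d)"
  using assms
proof (induction rule: reachable.induct)
  case start
  have "reachable N (-1) 1"
    using reachable.step[OF reachable.start] start by simp
  then show ?case
    using reachable.step[of N "-1" 1 "-1" 0] start by simp
next
  case (step a c d b)
  then show ?case by (intro reachable.step[OF step.IH]) auto
qed

lemma reachable_denominator_one:
  assumes "\<not> N dvd 1"
  shows "reachable N b 1"
proof (induction b rule: int_induct[where k = 0])
  case base
  show ?case using assms by (rule reachable.start)
next
  case (step1 b)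
  \<comment> \<open>the only upward move along \<open>d = 1\<close> passes through \<open>d = -1\<close>\<close>
  have "reachable N (-b) (-1)" using reachable_uminus[OF step1.IH] by simp
  from reachable.step[OF this, of 1 "b + 1"] assms show ?case by simp
next
  case (step2 b)
  show ?case using reachable.step[OF step2.IH, of 1 "b - 1"] assms by simp
qed

lemma unimodular_imp_gcd_eq_1:
  fixes a b c d :: int
  assumes "a * d - b * c = 1"
  shows "gcd a c = 1"
proof -
  have "gcd a c dvd a * d - b * c" by simp
  then show ?thesis using assms by simp
qed

lemma unimodular_descent:
  fixes N b d :: int
  assumes "gcd b d = 1" and "\<not> N dvd d" and "\<bar>d\<bar> \<ge> 2"
  obtains a c where "a * d - b * c = 1" and "\<bar>c\<bar> < \<bar>d\<bar>" and "\<not> N dvd c"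
proof -
  obtain u v where "u * b + v * d = 1"
    using bezout_int[of b d] assms(1) by auto
  define q where "q = (-u) div d"
  define c where "c = (-u) mod d"
  define a where "a = v - q * b"
  have c_eq: "c = -u - q * d"
    unfolding c_def q_def by (simp add: minus_div_mult_eq_mod [symmetric])
  have "a * d - b * c = u * b + v * d"
    unfolding a_def c_eq by (simp add: algebra_simps)
  with \<open>u * b + v * d = 1\<close> have det: "a * d - b * c = 1" by simp
  have "c \<noteq> 0"
  proof
    assume "c = 0"
    then have "a * d = 1" using det by simp
    then have "d dvd 1" by (metis dvd_triv_right)
    with assms(3) show False by auto
  qed
  then have "sgn c = sgn d"
    unfolding c_def using assms(3) by (intro sgn_mod) auto
  moreover have "\<bar>c\<bar> < \<bar>d\<bar>"
    unfolding c_def using assms(3) by (intro abs_mod_less) auto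
  ultimately have "\<bar>c - d\<bar> < \<bar>d\<bar>"
    using \<open>c \<noteq> 0\<close> by (auto simp: sgn_if split: if_splits)
  have "\<not> N dvd c \<or> \<not> N dvd (c - d)"
    using assms(2) dvd_diff[of N c "c - d"] by auto
  moreover have "(a - b) * d - b * (c - d) = 1"
    using det by (simp add: algebra_simps)
  ultimately show thesis
    using that det \<open>\<bar>c\<bar> < \<bar>d\<bar>\<close> \<open>\<bar>c - d\<bar> < \<bar>d\<bar>\<close> by blast
qed

lemma reachable_if_coprime:
  fixes N b d :: int
  assumes "gcd b d = 1" and "\<not> N dvd d"
  shows "reachable N b d"
  using assms
proof (induction "nat \<bar>d\<bar>" arbitrary: b d rule: less_induct)
  case less
  have N_nonunit: "\<not> N dvd 1" using less.prems(2) by (meson dvd_trans one_dvd)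
  have "d \<noteq> 0" using less.prems(2) by auto
  then consider "d = 1" | "d = -1" | "\<bar>d\<bar> \<ge> 2" by linarith
  then show ?case
  proof cases
    case 1
    then show ?thesis using reachable_denominator_one[OF N_nonunit] by simp
  next
    case 2
    then show ?thesis
      using reachable_uminus[OF reachable_denominator_one[OF N_nonunit, of "-b"]] by simp
  next
    case 3
    then obtain a c where det: "a * d - b * c = 1" and "\<bar>c\<bar> < \<bar>d\<bar>" "\<not> N dvd c"
      using unimodular_descent[OF less.prems] by blast
    then have "reachable N a c"
      using less.hyps unimodular_imp_gcd_eq_1[OF det] by simp
    then show ?thesis using det less.prems(2) by (rule reachable.step)
  qed
qed

theorem mainTheorem8:
  fixes N :: int and b d :: int
  assumes "N \<ge> 2"
    and "gcd b d = 1"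
    and "\<not> N dvd d"
  shows "\<exists>(k::nat) (bs::nat \<Rightarrow> int) (ds::nat \<Rightarrow> int).
           bs 0 = 0 \<and> ds 0 = 1 \<and> bs k = b \<and> ds k = d \<and>
           (\<forall>i<k. bs i * ds (Suc i) - bs (Suc i) * ds i = 1) \<and>
           (\<forall>i\<le>k. \<not> N dvd ds i)"
  using reachable_imp_chain[OF reachable_if_coprime[OF assms(2,3)]] .

end
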